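(* Let $n\ge 1$, $p\ge 2$, $k\ge 1$ be integers and $\sigma>0$. Let ${\bf X}\in\{0,1\}^{n\times p}$ have no zero column, with columns ${\bf x}_1,\dots,{\bf x}_p$. Let $T$ be a finite rooted tree with node set $V(T)$, let ${\bf A}\in\mathbb{R}^{p\times |V(T)|}$, and let $\mathcal{G}$ be a partition of $V(T)$ into nonempty groups. Assume: (i) every group $g\in\mathcal G$ has size $p_g\le 2^k-1$; (ii) $|\mathcal G|\le p$; (iii) for every $g\in\mathcal G$, all entries of the matrix ${\bf X}{\bf A}{\bf P}_g$ lie in $\{0,1\}$, where ${\bf P}_g$ is the $|V(T)|\times|V(T)|$ diagonal matrix with $({\bf P}_g)_{vv}=1$ if $v\in g$ and $0$ otherwise. Suppose ${\bf y}={\bf X}\boldsymbol\beta^*+\boldsymbol\varepsilon$ with $\boldsymbol\varepsilon\sim N_n({\bf 0},\sigma^2{\bf I}_n)$, where $\boldsymbol\beta^*={\bf A}\boldsymbol\gamma^*$ for some $\boldsymbol\gamma^*\in\mathbb{R}^{|V(T)|}$. Fix $\alpha\in[0,1]$, weights $\tilde w_j=\|{\bf x}_j\|/\sqrt n$ ($1\le j\le p$) and $w_g=\sqrt{p_g/(2^k-1)}$ ($g\in\mathcal G$), and a tuning parameter $\lambda\ge 4\sqrt{2^k-1}\,\sigma\sqrt{\log p/n}$. Let $(\hat{\boldsymbol\beta},\hat{\boldsymbol\gamma})$ be any minimizer, over all pairs $(\boldsymbol\beta,\boldsymbol\gamma)\in\mathbb{R}^p\times\mathbb{R}^{|V(T)|}$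 with $\boldsymbol\beta={\bf A}\boldsymbol\gamma$, of $$\frac{1}{2n}\|{\bf y}-{\bf X}\boldsymbol\beta\|^2+\lambda\Big[(1-\alpha)\sum_{j=1}^p\tilde w_j|\beta_j|+\alpha\sum_{g\in\mathcal G}w_g\|\boldsymbol\gamma_g\|\Big],$$ where $\boldsymbol\gamma_g$ is the subvector of $\boldsymbol\gamma$ indexed by $g$. Then, with probability at least $1-\frac1p-\frac{2}{p^2}$, $$\frac1n\|{\bf X}\hat{\boldsymbol\beta}-{\bf X}\boldsymbol\beta^*\|^2\le 4\lambda\Big[(1-\alpha)\sum_{j=1}^p\tilde w_j|\beta^*_j|+\alpha\sum_{g\in\mathcal G}w_g\|\boldsymbol\gamma^*_g\|\Big].$$
   Context: This is the prediction error bound for the tree-guided feature selection and logic aggregation (TSLA) estimator without intercept. In the paper's construction: the original binary features are the $p_0$ leaves of a hierarchy tree in which every internal node has at most $k$ children. The tree is expanded by adding, for each internal node, "derived" nodes representing products (logical "and") of subsets of its children's (or-aggregated) features; the expanded tree $T$ has $p$ leaves, corresponding to the columns of the expanded binary design ${\bf X}$ (zero columns dropped), and every internal node of $T$ has at most $2^k-1$ children. Each node $u$ of $T$ carries a coefficient $\gamma_u$; a native leaf $u$ has $\beta_u=\sum_{v\in \mathrm{Anc}(u)\cup\{u\}}\gamma_v$ and a derived leaf built from an aggregation set $\mathcal S$ has $\beta_u=(-1)^{|\mathcal S|-1}\sum_{v\in\mathrm{Anc}(u)\cup\{u\}}\gamma_v$, which defines the linear map $\boldsymbol\beta={\bf A}\boldsymbol\gamma$.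 The partition is $\mathcal G=\{\{\text{root}\}\}\cup\{C(u): u \text{ internal node of } T\}$ with $C(u)$ the children of $u$. For this construction hypotheses (i)–(iii) hold (each column of ${\bf X}{\bf A}{\bf P}_g$ is an or-aggregation of features, hence binary). Norms $\|\cdot\|$ are Euclidean. *)

theory Defs
  imports "HOL-Probability.Probability"
begin

text \<open>Vectors in R^n are functions nat => real, meaningful on indices {..<n};
  matrices are functions of two indices. Tree nodes have an abstract type 'v,
  the node set is V.\<close>

definition rooted_tree :: "'v set \<Rightarrow> 'v \<Rightarrow> ('v \<Rightarrow> 'v) \<Rightarrow> bool" where
  "rooted_tree V r par \<longleftrightarrow> finite V \<and> r \<in> V \<and> par ` (V - {r}) \<subseteq> V \<and>
     (\<forall>v\<in>V. \<exists>m. (par ^^ m) v = r)"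

definition is_partition :: "'v set set \<Rightarrow> 'v set \<Rightarrow> bool" where
  "is_partition G V \<longleftrightarrow> (\<forall>g\<in>G. g \<noteq> {} \<and> g \<subseteq> V) \<and> \<Union>G = V \<and>
     (\<forall>g\<in>G. \<forall>h\<in>G. g \<noteq> h \<longrightarrow> g \<inter> h = {})"

definition linmap :: "'v set \<Rightarrow> (nat \<Rightarrow> 'v \<Rightarrow> real) \<Rightarrow> ('v \<Rightarrow> real) \<Rightarrow> nat \<Rightarrow> real" where
  "linmap V A \<gamma> j = (\<Sum>v\<in>V. A j v * \<gamma> v)"

definition col_norm :: "nat \<Rightarrow> (nat \<Rightarrow> nat \<Rightarrow> real) \<Rightarrow> nat \<Rightarrow> real" where
  "col_norm n X j = sqrt (\<Sum>i<n. (X i j)\<^sup>2)"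

definition tsla_penalty :: "nat \<Rightarrow> nat \<Rightarrow> nat \<Rightarrow> (nat \<Rightarrow> nat \<Rightarrow> real) \<Rightarrow> 'v set set \<Rightarrow> real
    \<Rightarrow> (nat \<Rightarrow> real) \<Rightarrow> ('v \<Rightarrow> real) \<Rightarrow> real" where
  "tsla_penalty n p k X G \<alpha> \<beta> \<gamma> =
     (1 - \<alpha>) * (\<Sum>j<p. (col_norm n X j / sqrt (real n)) * \<bar>\<beta> j\<bar>)
     + \<alpha> * (\<Sum>g\<in>G. sqrt (real (card g) / (2 ^ k - 1)) * sqrt (\<Sum>v\<in>g. (\<gamma> v)\<^sup>2))"

definition tsla_objective :: "nat \<Rightarrow> nat \<Rightarrow> nat \<Rightarrow> (nat \<Rightarrow> nat \<Rightarrow> real) \<Rightarrow> 'v set set \<Rightarrow> real \<Rightarrow> real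
    \<Rightarrow> (nat \<Rightarrow> real) \<Rightarrow> (nat \<Rightarrow> real) \<Rightarrow> ('v \<Rightarrow> real) \<Rightarrow> real" where
  "tsla_objective n p k X G \<alpha> lam y \<beta> \<gamma> =
     1 / (2 * real n) * (\<Sum>i<n. (y i - (\<Sum>j<p. X i j * \<beta> j))\<^sup>2)
     + lam * tsla_penalty n p k X G \<alpha> \<beta> \<gamma>"

definition gaussian_vec :: "nat \<Rightarrow> real \<Rightarrow> (nat \<Rightarrow> real) measure" where
  "gaussian_vec n \<sigma> = PiM {..<n} (\<lambda>_. density lborel (normal_density 0 \<sigma>))"

end

theory Submission
  imports Defs
begin

text \<open>Write \<open>P\<close> for the penalty and \<open>\<Delta> = \<beta>h - \<beta>s\<close>. Comparing the objective at the minimiser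
  \<open>(\<beta>h, \<gamma>h)\<close> with its value at the truth \<open>(\<beta>s, \<gamma>s)\<close> gives the basic inequality
  \<open>\<parallel>X\<Delta>\<parallel>\<^sup>2/n \<le> 2\<langle>\<epsilon>, X\<Delta>\<rangle>/n + 2\<lambda>(P(\<beta>s, \<gamma>s) - P(\<beta>h, \<gamma>h))\<close>. Because \<open>\<beta> = A\<gamma>\<close>, the cross term
  equals both \<open>\<langle>X\<^sup>T\<epsilon>, \<beta>h - \<beta>s\<rangle>\<close> and \<open>\<langle>(XA)\<^sup>T\<epsilon>, \<gamma>h - \<gamma>s\<rangle>\<close>. The first is at most \<open>\<lambda>n\<close> times the
  weighted \<open>\<ell>\<^sub>1\<close> part of the penalty as soon as every column score \<open>|x\<^sub>j\<^sup>T\<epsilon>|\<close> lies below its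
  threshold, the second (by Cauchy-Schwarz in each group) at most \<open>\<lambda>n\<close> times the group part as
  soon as every group score \<open>\<parallel>((XA)\<^sup>T\<epsilon>)\<^sub>g\<parallel>\<close> does; then \<open>\<langle>\<epsilon>, X\<Delta>\<rangle> \<le> \<lambda>n(P(\<beta>h, \<gamma>h) + P(\<beta>s, \<gamma>s))\<close>
  and the claim follows.

  Each score is a centred Gaussian whose variance is at most \<open>\<sigma>\<^sup>2\<close> times a known scale \<open>s\<close>, so
  \<open>exp (score\<^sup>2 / (4\<sigma>\<^sup>2 s))\<close> has mean at most \<open>\<surd>2\<close>; by Jensen the same holds for the average of
  these over a group. Markov's inequality for the sum of the at most \<open>2p\<close> such averages at level
  \<open>p\<^sup>4\<close> makes all thresholds hold at once with probability at least \<open>1 - 1/p\<close>.\<close>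

section \<open>Gaussian vectors\<close>

lemma nn_integral_normal_density_mult_exp_square:
  fixes \<tau> a :: real
  assumes "\<tau> > 0" and "2 * a * \<tau>\<^sup>2 < 1"
  shows "(\<integral>\<^sup>+x. ennreal (normal_density 0 \<tau> x * exp (a * x\<^sup>2)) \<partial>lborel)
           = ennreal (1 / sqrt (1 - 2 * a * \<tau>\<^sup>2))"
proof -
  define q where "q = 1 - 2 * a * \<tau>\<^sup>2"
  have q: "q > 0" using assms(2) by (simp add: q_def)
  define \<rho> where "\<rho> = \<tau> / sqrt q"
  have \<rho>: "\<rho> > 0" using assms(1) q by (simp add: \<rho>_def)
  \<comment> \<open>Multiplying by \<open>exp (a x\<^sup>2)\<close> rescales the variance from \<open>\<tau>\<^sup>2\<close> to \<open>\<tau>\<^sup>2 / q\<close>.\<close>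
  have density: "normal_density 0 \<tau> x * exp (a * x\<^sup>2) = normal_density 0 \<rho> x / sqrt q" for x
  proof -
    have "- x\<^sup>2 / (2 * \<tau>\<^sup>2) + a * x\<^sup>2 = - x\<^sup>2 / (2 * \<rho>\<^sup>2)"
      using assms(1) q by (simp add: \<rho>_def q_def field_simps)
    moreover have "sqrt (2 * pi * \<rho>\<^sup>2) = sqrt (2 * pi * \<tau>\<^sup>2) / sqrt q"
      using assms(1) q by (simp add: \<rho>_def power_divide real_sqrt_divide real_sqrt_mult)
    ultimately show ?thesis
      unfolding normal_density_def using assms(1) q by (simp add: mult_exp_exp field_simps)
  qed
  have "(\<integral>\<^sup>+x. ennreal (normal_density 0 \<tau> x * exp (a * x\<^sup>2)) \<partial>lborel)
      = (\<integral>\<^sup>+x. ennreal (1 / sqrt q) * ennreal (normal_density 0 \<rho> x) \<partial>lborel)"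
    using q by (intro nn_integral_cong) (simp add: density ennreal_mult[symmetric])
  also have "\<dots> = ennreal (1 / sqrt q) * (\<integral>\<^sup>+x. ennreal (normal_density 0 \<rho> x) \<partial>lborel)"
    by (simp add: nn_integral_cmult)
  also have "(\<integral>\<^sup>+x. ennreal (normal_density 0 \<rho> x) \<partial>lborel) = 1"
    using \<rho> by (subst nn_integral_eq_integral) auto
  finally show ?thesis by (simp add: q_def)
qed

lemma prob_space_gaussian_vec: "\<sigma> > 0 \<Longrightarrow> prob_space (gaussian_vec n \<sigma>)"
  unfolding gaussian_vec_def by (intro prob_space_PiM prob_space_normal_density)

lemma measurable_gaussian_vec_component:
  "i < n \<Longrightarrow> (\<lambda>\<omega>. \<omega> i) \<in> borel_measurable (gaussian_vec n \<sigma>)"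
  unfolding gaussian_vec_def
  by (subst measurable_cong_sets[of _ _ _ "density lborel (normal_density 0 \<sigma>)"])
    (auto intro: measurable_component_singleton)

lemma measurable_gaussian_vec_linear_form:
  "(\<lambda>\<omega>. \<Sum>i<n. c i * \<omega> i) \<in> borel_measurable (gaussian_vec n \<sigma>)"
  by (intro borel_measurable_sum borel_measurable_times borel_measurable_const
      measurable_gaussian_vec_component) auto

lemma distr_gaussian_vec_component:
  assumes "i < n" and "\<sigma> > 0" and "sets N = sets borel"
  shows "distr (gaussian_vec n \<sigma>) N (\<lambda>\<omega>. \<omega> i) = density lborel (normal_density 0 \<sigma>)"
proof -
  have "distr (gaussian_vec n \<sigma>) N (\<lambda>\<omega>. \<omega> i)
      = distr (gaussian_vec n \<sigma>) (density lborel (normal_density 0 \<sigma>)) (\<lambda>\<omega>. \<omega> i)"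
    using assms(3) by (intro distr_cong) auto
  also have "\<dots> = density lborel (normal_density 0 \<sigma>)"
    unfolding gaussian_vec_def
    using assms by (intro distr_PiM_component prob_space_normal_density) auto
  finally show ?thesis .
qed

lemma distributed_gaussian_vec_component:
  assumes "i < n" and "\<sigma> > 0"
  shows "distributed (gaussian_vec n \<sigma>) lborel (\<lambda>\<omega>. \<omega> i) (normal_density 0 \<sigma>)"
  unfolding distributed_def
  using distr_gaussian_vec_component[OF assms, of lborel] measurable_gaussian_vec_component[OF assms(1)]
  by simp

lemma indep_vars_gaussian_vec_components:
  assumes "\<sigma> > 0"
  shows "prob_space.indep_vars (gaussian_vec n \<sigma>) (\<lambda>_. borel) (\<lambda>i \<omega>. \<omega> i) {..<n}"
proof -
  let ?M = "gaussian_vec n \<sigma>"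
  interpret prob_space ?M by (rule prob_space_gaussian_vec) fact
  have "distr ?M (\<Pi>\<^sub>M i\<in>{..<n}. borel) (\<lambda>x. \<lambda>i\<in>{..<n}. x i) = distr ?M ?M (\<lambda>x. x)"
  proof (rule distr_cong)
    show "sets (\<Pi>\<^sub>M i\<in>{..<n}. borel) = sets ?M"
      unfolding gaussian_vec_def by (rule sets_PiM_cong) auto
  qed (auto simp: gaussian_vec_def space_PiM PiE_def extensional_def restrict_def)
  also have "\<dots> = (\<Pi>\<^sub>M i\<in>{..<n}. distr ?M borel (\<lambda>\<omega>. \<omega> i))"
  proof -
    have "(\<Pi>\<^sub>M i\<in>{..<n}. distr ?M borel (\<lambda>\<omega>. \<omega> i))
        = (\<Pi>\<^sub>M i\<in>{..<n}. density lborel (normal_density 0 \<sigma>))"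
      using assms by (intro PiM_cong refl distr_gaussian_vec_component) auto
    then show ?thesis by (simp add: gaussian_vec_def)
  qed
  finally have distr_eq: "distr ?M (\<Pi>\<^sub>M i\<in>{..<n}. borel) (\<lambda>x. \<lambda>i\<in>{..<n}. x i)
      = (\<Pi>\<^sub>M i\<in>{..<n}. distr ?M borel (\<lambda>\<omega>. \<omega> i))" .
  show ?thesis
  proof (cases "n = 0")
    case False
    with distr_eq show ?thesis
      by (subst indep_vars_iff_distr_eq_PiM') (auto simp: measurable_gaussian_vec_component)
  next
    case True
    then have "{..<n} = {}" by simp
    then show ?thesis
      unfolding indep_vars_def indep_sets_def by (simp add: measurable_gaussian_vec_component)
  qed
qed

lemma distributed_gaussian_vec_linear_form:
  assumes "\<sigma> > 0" and "\<exists>i<n. c i \<noteq> 0"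
  shows "distributed (gaussian_vec n \<sigma>) lborel (\<lambda>\<omega>. \<Sum>i<n. c i * \<omega> i)
           (normal_density 0 (\<sigma> * sqrt (\<Sum>i<n. (c i)\<^sup>2)))"
proof -
  interpret prob_space "gaussian_vec n \<sigma>" by (rule prob_space_gaussian_vec) fact
  define I where "I = {i\<in>{..<n}. c i \<noteq> 0}"
  have I: "finite I" "I \<noteq> {}" using assms(2) by (auto simp: I_def)
  have "indep_vars (\<lambda>_. borel) (\<lambda>i \<omega>. c i * \<omega> i) {..<n}"
    using indep_vars_compose2[OF indep_vars_gaussian_vec_components[OF assms(1)],
        of "\<lambda>i x. c i * x" "\<lambda>_. borel"] by simp
  then have "indep_vars (\<lambda>_. borel) (\<lambda>i \<omega>. c i * \<omega> i) I"
    by (rule indep_vars_subset) (auto simp: I_def)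
  moreover have "distributed (gaussian_vec n \<sigma>) lborel (\<lambda>\<omega>. c i * \<omega> i)
                   (normal_density 0 (\<bar>c i\<bar> * \<sigma>))" if "i \<in> I" for i
    using normal_density_affine[OF distributed_gaussian_vec_component assms(1), of i "c i" 0] that assms(1)
    by (simp add: I_def)
  ultimately have "distributed (gaussian_vec n \<sigma>) lborel (\<lambda>\<omega>. \<Sum>i\<in>I. c i * \<omega> i)
                     (normal_density 0 (sqrt (\<Sum>i\<in>I. (\<bar>c i\<bar> * \<sigma>)\<^sup>2)))"
    using sum_indep_normal[OF I, of "\<lambda>i \<omega>. c i * \<omega> i" "\<lambda>i. \<bar>c i\<bar> * \<sigma>" "\<lambda>_. 0"] assms(1)
    by (simp add: I_def)
  moreover have "(\<Sum>i\<in>I. f i) = (\<Sum>i<n. f i)" if "\<And>i. c i = 0 \<Longrightarrow> f i = 0" for f :: "nat \<Rightarrow> real"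
    using that by (intro sum.mono_neutral_left) (auto simp: I_def)
  moreover have "sqrt (\<Sum>i<n. (\<bar>c i\<bar> * \<sigma>)\<^sup>2) = \<sigma> * sqrt (\<Sum>i<n. (c i)\<^sup>2)"
    using assms(1) by (simp add: power_mult_distrib sum_distrib_right[symmetric] real_sqrt_mult)
  ultimately show ?thesis by simp
qed

lemma nn_integral_gaussian_vec_exp_square_le:
  assumes "\<sigma> > 0" and "s > 0" and "(\<Sum>i<n. (c i)\<^sup>2) \<le> s"
  shows "(\<integral>\<^sup>+\<omega>. ennreal (exp ((\<Sum>i<n. c i * \<omega> i)\<^sup>2 / (4 * \<sigma>\<^sup>2 * s))) \<partial>gaussian_vec n \<sigma>)
           \<le> ennreal (sqrt 2)"
proof (cases "\<exists>i<n. c i \<noteq> 0")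
  case True
  define \<tau> where "\<tau> = \<sigma> * sqrt (\<Sum>i<n. (c i)\<^sup>2)"
  define a where "a = 1 / (4 * \<sigma>\<^sup>2 * s)"
  obtain i where "i < n" "c i \<noteq> 0" using True by blast
  then have "(\<Sum>i<n. (c i)\<^sup>2) > 0" by (intro sum_pos2[of _ i]) auto
  with assms(1) have "\<tau> > 0" by (simp add: \<tau>_def)
  have "2 * a * \<tau>\<^sup>2 = (\<Sum>i<n. (c i)\<^sup>2) / (2 * s)"
    using assms(1,2) by (simp add: a_def \<tau>_def sum_nonneg field_simps)
  also have "\<dots> \<le> 1 / 2"
    using assms(2,3) by (simp add: field_simps)
  finally have small: "2 * a * \<tau>\<^sup>2 \<le> 1 / 2" .
  have "(\<integral>\<^sup>+\<omega>. ennreal (exp ((\<Sum>i<n. c i * \<omega> i)\<^sup>2 / (4 * \<sigma>\<^sup>2 * s))) \<partial>gaussian_vec n \<sigma>)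
      = (\<integral>\<^sup>+x. ennreal (normal_density 0 \<tau> x) * ennreal (exp (a * x\<^sup>2)) \<partial>lborel)"
    unfolding \<tau>_def a_def
    by (subst distributed_nn_integral[OF distributed_gaussian_vec_linear_form[OF assms(1) True]])
      auto
  also have "\<dots> = ennreal (1 / sqrt (1 - 2 * a * \<tau>\<^sup>2))"
    using \<open>\<tau> > 0\<close> small
    by (simp add: nn_integral_normal_density_mult_exp_square ennreal_mult[symmetric])
  also have "\<dots> \<le> ennreal (sqrt 2)"
  proof (rule ennreal_leI)
    have "sqrt (1 / 2) \<le> sqrt (1 - 2 * a * \<tau>\<^sup>2)" using small by simp
    then have "1 / sqrt (1 - 2 * a * \<tau>\<^sup>2) \<le> 1 / sqrt (1 / 2)"
      by (intro divide_left_mono) auto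
    then show "1 / sqrt (1 - 2 * a * \<tau>\<^sup>2) \<le> sqrt 2" by (simp add: real_sqrt_divide)
  qed
  finally show ?thesis .
next
  case False
  interpret prob_space "gaussian_vec n \<sigma>" by (rule prob_space_gaussian_vec) fact
  from False show ?thesis by (simp add: emeasure_space_1)
qed

lemma integrable_gaussian_vec_exp_square:
  assumes "\<sigma> > 0" and "s > 0" and "(\<Sum>i<n. (c i)\<^sup>2) \<le> s"
  shows "integrable (gaussian_vec n \<sigma>) (\<lambda>\<omega>. exp ((\<Sum>i<n. c i * \<omega> i)\<^sup>2 / (4 * \<sigma>\<^sup>2 * s)))"
proof (rule integrableI_nonneg)
  have "(\<lambda>x. exp (x\<^sup>2 / (4 * \<sigma>\<^sup>2 * s))) \<in> borel_measurable borel" by measurable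
  from measurable_compose[OF measurable_gaussian_vec_linear_form this]
  show "(\<lambda>\<omega>. exp ((\<Sum>i<n. c i * \<omega> i)\<^sup>2 / (4 * \<sigma>\<^sup>2 * s))) \<in> borel_measurable (gaussian_vec n \<sigma>)" .
  show "(\<integral>\<^sup>+\<omega>. ennreal (exp ((\<Sum>i<n. c i * \<omega> i)\<^sup>2 / (4 * \<sigma>\<^sup>2 * s))) \<partial>gaussian_vec n \<sigma>) < \<infinity>"
    using nn_integral_gaussian_vec_exp_square_le[OF assms] by (auto intro: le_less_trans)
qed simp

lemma integral_gaussian_vec_exp_square_le:
  assumes "\<sigma> > 0" and "s > 0" and "(\<Sum>i<n. (c i)\<^sup>2) \<le> s"
  shows "(\<integral>\<omega>. exp ((\<Sum>i<n. c i * \<omega> i)\<^sup>2 / (4 * \<sigma>\<^sup>2 * s)) \<partial>gaussian_vec n \<sigma>) \<le> sqrt 2"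
  using nn_integral_gaussian_vec_exp_square_le[OF assms]
  by (subst (asm) nn_integral_eq_integral[OF integrable_gaussian_vec_exp_square[OF assms]])
    auto

section \<open>Simultaneous control of Gaussian scores\<close>

lemma exp_mean_le_mean_exp:
  fixes y :: "'a \<Rightarrow> real"
  assumes "finite g" and "g \<noteq> {}"
  shows "exp ((\<Sum>u\<in>g. y u) / card g) \<le> (\<Sum>u\<in>g. exp (y u)) / card g"
proof -
  have "exp (\<Sum>u\<in>g. (1 / card g) *\<^sub>R y u) \<le> (\<Sum>u\<in>g. (1 / card g) * exp (y u))"
    using assms by (intro convex_on_sum[OF assms exp_convex]) auto
  then show ?thesis by (simp add: sum_divide_distrib)
qed

lemma (in prob_space) prob_less_ge_Markov:
  assumes "integrable M f" and "\<And>x. x \<in> space M \<Longrightarrow> 0 \<le> f x" and "t > 0"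
  shows "prob {x\<in>space M. f x < t} \<ge> 1 - (\<integral>x. f x \<partial>M) / t"
proof -
  have [measurable]: "f \<in> borel_measurable M" using assms(1) by (rule borel_measurable_integrable)
  have "{x\<in>space M. f x < t} = space M - {x\<in>space M. f x \<ge> t}" by auto
  then have "prob {x\<in>space M. f x < t} = 1 - prob {x\<in>space M. f x \<ge> t}"
    by (simp add: prob_compl)
  moreover have "prob {x\<in>space M. f x \<ge> t} \<le> (\<integral>x. f x \<partial>M) / t"
    using assms by (intro integral_Markov_inequality_measure) auto
  ultimately show ?thesis by linarith
qed

lemma (in prob_space) prob_Int_ge:
  assumes "A \<in> events" and "B \<in> events"
  shows "prob (A \<inter> B) \<ge> prob A + prob B - 1"
  using finite_measure_Union'[OF assms] finite_measure_Diff'[OF assms(2,1)] prob_le_1[of "A \<union> B"]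
  by (simp add: Int_commute)

lemma gaussian_vec_group_energy_event:
  fixes \<sigma> t :: real and c :: "'u \<Rightarrow> nat \<Rightarrow> real" and s :: "'u \<Rightarrow> real" and H :: "'u set set"
  assumes "\<sigma> > 0" and "t > 0" and "finite H"
    and groups: "\<And>g. g \<in> H \<Longrightarrow> finite g \<and> g \<noteq> {}"
    and scale: "\<And>g u. g \<in> H \<Longrightarrow> u \<in> g \<Longrightarrow> 0 < s u \<and> (\<Sum>i<n. (c u i)\<^sup>2) \<le> s u"
  shows "\<exists>E \<in> sets (gaussian_vec n \<sigma>).
           measure (gaussian_vec n \<sigma>) E \<ge> 1 - card H * sqrt 2 / t \<and>
           (\<forall>\<omega>\<in>E. \<forall>g\<in>H. (\<Sum>u\<in>g. (\<Sum>i<n. c u i * \<omega> i)\<^sup>2 / s u) < 4 * \<sigma>\<^sup>2 * card g * ln t)"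
proof -
  let ?M = "gaussian_vec n \<sigma>"
  interpret prob_space ?M by (rule prob_space_gaussian_vec) fact
  define y where "y u \<omega> = (\<Sum>i<n. c u i * \<omega> i)\<^sup>2 / (4 * \<sigma>\<^sup>2 * s u)" for u and \<omega> :: "nat \<Rightarrow> real"
  define mean where "mean g \<omega> = (\<Sum>u\<in>g. exp (y u \<omega>)) / card g" for g \<omega>
  define \<Phi> where "\<Phi> \<omega> = (\<Sum>g\<in>H. mean g \<omega>)" for \<omega>
  have mean_nonneg: "0 \<le> mean g \<omega>" for g \<omega>
    by (simp add: mean_def sum_nonneg)
  have mean: "integrable ?M (mean g) \<and> (\<integral>\<omega>. mean g \<omega> \<partial>?M) \<le> sqrt 2" if "g \<in> H" for g
  proof
    have int: "integrable ?M (\<lambda>\<omega>. exp (y u \<omega>))" "(\<integral>\<omega>. exp (y u \<omega>) \<partial>?M) \<le> sqrt 2" if "u \<in> g" for u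
      unfolding y_def using scale[OF \<open>g \<in> H\<close> that] assms(1)
      by (auto intro!: integrable_gaussian_vec_exp_square integral_gaussian_vec_exp_square_le)
    then show "integrable ?M (mean g)"
      unfolding mean_def[abs_def] by auto
    have "(\<integral>\<omega>. mean g \<omega> \<partial>?M) = (\<Sum>u\<in>g. \<integral>\<omega>. exp (y u \<omega>) \<partial>?M) / card g"
      unfolding mean_def using int by (simp add: Bochner_Integration.integral_sum)
    also have "\<dots> \<le> (\<Sum>u\<in>g. sqrt 2) / card g"
      using int by (intro divide_right_mono sum_mono) auto
    also have "\<dots> = sqrt 2"
      using groups[OF that] by simp
    finally show "(\<integral>\<omega>. mean g \<omega> \<partial>?M) \<le> sqrt 2" .
  qed
  have \<Phi>_int: "integrable ?M \<Phi>"
    unfolding \<Phi>_def[abs_def] using mean by auto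
  have "(\<integral>\<omega>. \<Phi> \<omega> \<partial>?M) = (\<Sum>g\<in>H. \<integral>\<omega>. mean g \<omega> \<partial>?M)"
    unfolding \<Phi>_def using mean by (simp add: Bochner_Integration.integral_sum)
  also have "\<dots> \<le> card H * sqrt 2"
    using mean sum_mono[of H "\<lambda>g. \<integral>\<omega>. mean g \<omega> \<partial>?M" "\<lambda>_. sqrt 2"] by simp
  finally have \<Phi>_integral: "(\<integral>\<omega>. \<Phi> \<omega> \<partial>?M) \<le> card H * sqrt 2" .
  define E where "E = {\<omega>\<in>space ?M. \<Phi> \<omega> < t}"
  have "E \<in> sets ?M"
    using borel_measurable_integrable[OF \<Phi>_int] unfolding E_def by measurable
  moreover have "prob E \<ge> 1 - card H * sqrt 2 / t"
  proof -
    have "prob E \<ge> 1 - (\<integral>\<omega>. \<Phi> \<omega> \<partial>?M) / t"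
      unfolding E_def using \<Phi>_int assms(2) mean_nonneg
      by (intro prob_less_ge_Markov) (auto simp: \<Phi>_def[abs_def] sum_nonneg)
    moreover have "(\<integral>\<omega>. \<Phi> \<omega> \<partial>?M) / t \<le> card H * sqrt 2 / t"
      using \<Phi>_integral assms(2) by (simp add: divide_right_mono)
    ultimately show ?thesis by linarith
  qed
  moreover have "(\<Sum>u\<in>g. (\<Sum>i<n. c u i * \<omega> i)\<^sup>2 / s u) < 4 * \<sigma>\<^sup>2 * card g * ln t"
    if "\<omega> \<in> E" "g \<in> H" for \<omega> g
  proof -
    have "mean g \<omega> \<le> \<Phi> \<omega>"
      unfolding \<Phi>_def using assms(3) that(2) mean_nonneg by (intro member_le_sum) auto
    with that(1) have "mean g \<omega> < t" by (simp add: E_def)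
    with exp_mean_le_mean_exp[of g "\<lambda>u. y u \<omega>"] groups[OF that(2)]
    have "exp ((\<Sum>u\<in>g. y u \<omega>) / card g) < t" by (simp add: mean_def)
    then have "(\<Sum>u\<in>g. y u \<omega>) / card g < ln t"
      using assms(2) by (metis exp_less_cancel_iff exp_ln)
    then have "(\<Sum>u\<in>g. y u \<omega>) < card g * ln t"
      using groups[OF that(2)] by (simp add: divide_less_eq card_gt_0_iff mult.commute)
    moreover have "(\<Sum>u\<in>g. y u \<omega>) = (\<Sum>u\<in>g. (\<Sum>i<n. c u i * \<omega> i)\<^sup>2 / s u) / (4 * \<sigma>\<^sup>2)"
      unfolding y_def by (simp add: sum_divide_distrib mult.commute)
    ultimately show ?thesis
      using assms(1) by (simp add: divide_less_eq mult_ac)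
  qed
  ultimately show ?thesis by blast
qed

section \<open>The deterministic bound on the noise event\<close>

definition noise_column_bound :: "nat \<Rightarrow> nat \<Rightarrow> (nat \<Rightarrow> nat \<Rightarrow> real) \<Rightarrow> real \<Rightarrow> (nat \<Rightarrow> real) \<Rightarrow> bool"
  where "noise_column_bound n p X lam \<omega> \<longleftrightarrow>
    (\<forall>j<p. \<bar>\<Sum>i<n. X i j * \<omega> i\<bar> \<le> lam * real n * (col_norm n X j / sqrt (real n)))"

definition noise_group_bound :: "nat \<Rightarrow> nat \<Rightarrow> nat \<Rightarrow> (nat \<Rightarrow> nat \<Rightarrow> real) \<Rightarrow> (nat \<Rightarrow> 'v \<Rightarrow> real)
    \<Rightarrow> 'v set set \<Rightarrow> real \<Rightarrow> (nat \<Rightarrow> real) \<Rightarrow> bool"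
  where "noise_group_bound n p k X A G lam \<omega> \<longleftrightarrow>
    (\<forall>g\<in>G. sqrt (\<Sum>v\<in>g. (\<Sum>i<n. (\<Sum>j<p. X i j * A j v) * \<omega> i)\<^sup>2)
       \<le> lam * real n * sqrt (real (card g) / (2 ^ k - 1)))"

lemma sum_mult_matrix_swap:
  fixes w :: "'i \<Rightarrow> real" and b :: "'j \<Rightarrow> real"
  shows "(\<Sum>i\<in>I. w i * (\<Sum>j\<in>J. M i j * b j)) = (\<Sum>j\<in>J. b j * (\<Sum>i\<in>I. M i j * w i))"
  by (simp add: sum_distrib_left mult_ac sum.swap[of _ I])

lemma sum_mult_matrix_product_swap:
  fixes w :: "nat \<Rightarrow> real" and c :: "'v \<Rightarrow> real"
  shows "(\<Sum>i<n. w i * (\<Sum>j<p. X i j * (\<Sum>v\<in>V. A j v * c v)))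
           = (\<Sum>v\<in>V. c v * (\<Sum>i<n. (\<Sum>j<p. X i j * A j v) * w i))"
proof -
  have "(\<Sum>i<n. w i * (\<Sum>j<p. X i j * (\<Sum>v\<in>V. A j v * c v)))
      = (\<Sum>i<n. \<Sum>v\<in>V. \<Sum>j<p. c v * (X i j * A j v * w i))"
    by (simp add: sum_distrib_left mult_ac sum.swap[of _ "{..<p}"])
  also have "\<dots> = (\<Sum>v\<in>V. c v * (\<Sum>i<n. (\<Sum>j<p. X i j * A j v) * w i))"
    by (simp add: sum_distrib_left sum_distrib_right mult_ac sum.swap[of _ "{..<n}"])
  finally show ?thesis .
qed

lemma tsla_penalty_diff_le:
  fixes c c' :: "'v \<Rightarrow> real"
  assumes "0 \<le> \<alpha>" and "\<alpha> \<le> 1"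
  shows "tsla_penalty n p k X G \<alpha> (\<lambda>j. b j - b' j) (\<lambda>v. c v - c' v)
           \<le> tsla_penalty n p k X G \<alpha> b c + tsla_penalty n p k X G \<alpha> b' c'"
proof -
  have "(col_norm n X j / sqrt (real n)) * \<bar>b j - b' j\<bar>
          \<le> (col_norm n X j / sqrt (real n)) * \<bar>b j\<bar> + (col_norm n X j / sqrt (real n)) * \<bar>b' j\<bar>" for j
  proof -
    have "0 \<le> col_norm n X j / sqrt n" by (simp add: col_norm_def sum_nonneg)
    then show ?thesis by (metis abs_triangle_ineq4 distrib_left mult_left_mono)
  qed
  then have lasso: "(\<Sum>j<p. (col_norm n X j / sqrt (real n)) * \<bar>b j - b' j\<bar>)
      \<le> (\<Sum>j<p. (col_norm n X j / sqrt (real n)) * \<bar>b j\<bar>) + (\<Sum>j<p. (col_norm n X j / sqrt (real n)) * \<bar>b' j\<bar>)"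
    by (simp add: sum.distrib[symmetric] sum_mono)
  have "sqrt (\<Sum>v\<in>g. (c v - c' v)\<^sup>2) \<le> sqrt (\<Sum>v\<in>g. (c v)\<^sup>2) + sqrt (\<Sum>v\<in>g. (c' v)\<^sup>2)" for g :: "'v set"
    using L2_set_triangle_ineq[of "c" "\<lambda>v. - c' v" g] by (simp add: L2_set_def)
  then have "sqrt (real (card g) / (2 ^ k - 1)) * sqrt (\<Sum>v\<in>g. (c v - c' v)\<^sup>2)
      \<le> sqrt (real (card g) / (2 ^ k - 1)) * sqrt (\<Sum>v\<in>g. (c v)\<^sup>2)
        + sqrt (real (card g) / (2 ^ k - 1)) * sqrt (\<Sum>v\<in>g. (c' v)\<^sup>2)" for g :: "'v set"
    by (simp add: distrib_left[symmetric] mult_left_mono)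
  then have group: "(\<Sum>g\<in>G. sqrt (real (card g) / (2 ^ k - 1)) * sqrt (\<Sum>v\<in>g. (c v - c' v)\<^sup>2))
      \<le> (\<Sum>g\<in>G. sqrt (real (card g) / (2 ^ k - 1)) * sqrt (\<Sum>v\<in>g. (c v)\<^sup>2))
        + (\<Sum>g\<in>G. sqrt (real (card g) / (2 ^ k - 1)) * sqrt (\<Sum>v\<in>g. (c' v)\<^sup>2))"
    by (simp add: sum.distrib[symmetric] sum_mono)
  show ?thesis
    unfolding tsla_penalty_def
    using mult_left_mono[OF lasso, of "1 - \<alpha>"] mult_left_mono[OF group, of \<alpha>] assms
    by (simp add: algebra_simps)
qed

lemma inner_noise_le_tsla_penalty:
  fixes w b :: "nat \<Rightarrow> real" and c :: "'v \<Rightarrow> real"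
  assumes "finite V" and "is_partition G V" and "0 \<le> \<alpha>" and "\<alpha> \<le> 1"
    and column: "noise_column_bound n p X lam w" and group: "noise_group_bound n p k X A G lam w"
    and lin: "\<forall>j<p. b j = linmap V A c j"
  shows "(\<Sum>i<n. w i * (\<Sum>j<p. X i j * b j)) \<le> lam * real n * tsla_penalty n p k X G \<alpha> b c"
proof -
  define S where "S = (\<Sum>i<n. w i * (\<Sum>j<p. X i j * b j))"
  define W where "W v = (\<Sum>i<n. (\<Sum>j<p. X i j * A j v) * w i)" for v
  have lasso: "S \<le> lam * real n * (\<Sum>j<p. (col_norm n X j / sqrt (real n)) * \<bar>b j\<bar>)"
  proof -
    have "S = (\<Sum>j<p. b j * (\<Sum>i<n. X i j * w i))"
      unfolding S_def by (rule sum_mult_matrix_swap)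
    also have "\<dots> \<le> (\<Sum>j<p. \<bar>b j\<bar> * (lam * real n * (col_norm n X j / sqrt (real n))))"
    proof (rule sum_mono)
      fix j assume "j \<in> {..<p}"
      then have "\<bar>b j * (\<Sum>i<n. X i j * w i)\<bar> \<le> \<bar>b j\<bar> * (lam * real n * (col_norm n X j / sqrt (real n)))"
        unfolding abs_mult using column by (intro mult_left_mono) (auto simp: noise_column_bound_def)
      then show "b j * (\<Sum>i<n. X i j * w i) \<le> \<bar>b j\<bar> * (lam * real n * (col_norm n X j / sqrt (real n)))"
        by linarith
    qed
    finally show ?thesis by (simp add: sum_distrib_left mult_ac)
  qed
  have group_lasso: "S \<le> lam * real n * (\<Sum>g\<in>G. sqrt (real (card g) / (2 ^ k - 1)) * L2_set c g)"
  proof -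
    have G: "finite G" "\<forall>g\<in>G. finite g" "\<Union>G = V"
      "\<forall>g\<in>G. \<forall>h\<in>G. g \<noteq> h \<longrightarrow> g \<inter> h = {}"
      using assms(1,2) unfolding is_partition_def by (auto intro: finite_subset finite_UnionD)
    have "S = (\<Sum>v\<in>V. c v * W v)"
      unfolding S_def W_def using lin
      by (simp add: linmap_def sum_mult_matrix_product_swap[symmetric])
    also have "\<dots> = (\<Sum>g\<in>G. \<Sum>v\<in>g. c v * W v)"
      using sum.Union_disjoint[OF G(2) G(4)] G(3) by simp
    also have "\<dots> \<le> (\<Sum>g\<in>G. L2_set c g * L2_set W g)"
    proof (rule sum_mono)
      fix g
      have "(\<Sum>v\<in>g. c v * W v) \<le> (\<Sum>v\<in>g. \<bar>c v\<bar> * \<bar>W v\<bar>)"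
        by (intro sum_mono) (simp add: abs_mult[symmetric])
      then show "(\<Sum>v\<in>g. c v * W v) \<le> L2_set c g * L2_set W g"
        using L2_set_mult_ineq[of c W g] by linarith
    qed
    also have "\<dots> \<le> (\<Sum>g\<in>G. L2_set c g * (lam * real n * sqrt (real (card g) / (2 ^ k - 1))))"
      using group by (intro sum_mono mult_left_mono) (auto simp: noise_group_bound_def L2_set_def W_def sum_nonneg)
    finally show ?thesis by (simp add: sum_distrib_left mult_ac)
  qed
  have "S = (1 - \<alpha>) * S + \<alpha> * S" by (simp add: algebra_simps)
  also have "\<dots> \<le> lam * real n * tsla_penalty n p k X G \<alpha> b c"
    using mult_left_mono[OF lasso, of "1 - \<alpha>"] mult_left_mono[OF group_lasso, of \<alpha>] assms(3,4)
    unfolding tsla_penalty_def L2_set_def by (simp add: algebra_simps)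
  finally show ?thesis unfolding S_def .
qed

lemma tsla_prediction_error_le:
  fixes \<omega> \<beta>h \<beta>s :: "nat \<Rightarrow> real" and \<gamma>h \<gamma>s :: "'v \<Rightarrow> real"
  assumes "n > 0" and "lam \<ge> 0" and "finite V" and "is_partition G V" and "0 \<le> \<alpha>" and "\<alpha> \<le> 1"
    and column: "noise_column_bound n p X lam \<omega>" and group: "noise_group_bound n p k X A G lam \<omega>"
    and lin_h: "\<forall>j<p. \<beta>h j = linmap V A \<gamma>h j" and lin_s: "\<forall>j<p. \<beta>s j = linmap V A \<gamma>s j"
    and minimiser: "\<forall>\<beta> \<gamma>. (\<forall>j<p. \<beta> j = linmap V A \<gamma> j) \<longrightarrow>
                 tsla_objective n p k X G \<alpha> lam (\<lambda>i. (\<Sum>j<p. X i j * \<beta>s j) + \<omega> i) \<beta>h \<gamma>h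
                   \<le> tsla_objective n p k X G \<alpha> lam (\<lambda>i. (\<Sum>j<p. X i j * \<beta>s j) + \<omega> i) \<beta> \<gamma>"
  shows "1 / real n * (\<Sum>i<n. ((\<Sum>j<p. X i j * \<beta>h j) - (\<Sum>j<p. X i j * \<beta>s j))\<^sup>2)
           \<le> 4 * lam * tsla_penalty n p k X G \<alpha> \<beta>s \<gamma>s"
proof -
  define D where "D i = (\<Sum>j<p. X i j * \<beta>h j) - (\<Sum>j<p. X i j * \<beta>s j)" for i
  define Ph where "Ph = tsla_penalty n p k X G \<alpha> \<beta>h \<gamma>h"
  define Ps where "Ps = tsla_penalty n p k X G \<alpha> \<beta>s \<gamma>s"
  define N where "N = (\<Sum>i<n. (\<omega> i)\<^sup>2)"
  define Q where "Q = (\<Sum>i<n. (D i)\<^sup>2)"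
  define I where "I = (\<Sum>i<n. \<omega> i * D i)"
  have "I \<le> lam * real n * tsla_penalty n p k X G \<alpha> (\<lambda>j. \<beta>h j - \<beta>s j) (\<lambda>v. \<gamma>h v - \<gamma>s v)"
  proof -
    have "D i = (\<Sum>j<p. X i j * (\<beta>h j - \<beta>s j))" for i
      by (simp add: D_def right_diff_distrib sum_subtractf)
    moreover have "\<forall>j<p. \<beta>h j - \<beta>s j = linmap V A (\<lambda>v. \<gamma>h v - \<gamma>s v) j"
      using lin_h lin_s by (simp add: linmap_def right_diff_distrib sum_subtractf)
    ultimately show ?thesis
      using inner_noise_le_tsla_penalty[OF assms(3-6) column group] by (simp add: I_def)
  qed
  also have "\<dots> \<le> lam * real n * (Ph + Ps)"
    unfolding Ph_def Ps_def using assms(2,5,6)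
    by (intro mult_left_mono tsla_penalty_diff_le) auto
  finally have inner: "I \<le> lam * real n * (Ph + Ps)" .
  have "(\<Sum>i<n. ((\<Sum>j<p. X i j * \<beta>s j) + \<omega> i - (\<Sum>j<p. X i j * \<beta>h j))\<^sup>2)
      = N - 2 * I + Q"
    by (simp add: N_def Q_def I_def D_def power2_eq_square algebra_simps sum.distrib sum_subtractf
        sum_distrib_left)
  moreover have "tsla_objective n p k X G \<alpha> lam (\<lambda>i. (\<Sum>j<p. X i j * \<beta>s j) + \<omega> i) \<beta>h \<gamma>h
      \<le> tsla_objective n p k X G \<alpha> lam (\<lambda>i. (\<Sum>j<p. X i j * \<beta>s j) + \<omega> i) \<beta>s \<gamma>s"
    using minimiser lin_s by blast
  ultimately have "(N - 2 * I + Q) / (2 * real n) + lam * Ph \<le> N / (2 * real n) + lam * Ps"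
    unfolding tsla_objective_def Ph_def Ps_def N_def I_def by simp
  then have "2 * real n * ((N - 2 * I + Q) / (2 * real n) + lam * Ph)
      \<le> 2 * real n * (N / (2 * real n) + lam * Ps)"
    by (rule mult_left_mono) simp
  moreover have "2 * real n * ((N - 2 * I + Q) / (2 * real n) + lam * Ph)
      = N - 2 * I + Q + 2 * real n * lam * Ph"
    and "2 * real n * (N / (2 * real n) + lam * Ps) = N + 2 * real n * lam * Ps"
    using assms(1) by (simp_all add: field_simps)
  ultimately have "Q \<le> 2 * I + 2 * real n * lam * (Ps - Ph)"
    by (simp add: right_diff_distrib)
  with inner have "Q \<le> real n * (4 * lam * Ps)"
    by (simp add: algebra_simps)
  with assms(1) show ?thesis
    by (simp add: Q_def D_def Ps_def field_simps)
qed

section \<open>Probability of the noise event\<close>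

lemma noise_column_bound_event:
  fixes \<sigma> t lam :: real
  assumes "\<sigma> > 0" and "t > 0" and "lam \<ge> 0"
    and nonzero: "\<forall>j<p. \<exists>i<n. X i j \<noteq> 0"
    and lam: "4 * \<sigma>\<^sup>2 * ln t \<le> lam\<^sup>2 * real n"
  shows "\<exists>E \<in> sets (gaussian_vec n \<sigma>).
           measure (gaussian_vec n \<sigma>) E \<ge> 1 - p * sqrt 2 / t \<and>
           (\<forall>\<omega>\<in>E. noise_column_bound n p X lam \<omega>)"
proof -
  define s where "s j = (\<Sum>i<n. (X i j)\<^sup>2)" for j
  have s: "0 < s j" if "j < p" for j
  proof -
    obtain i where "i < n" "X i j \<noteq> 0" using nonzero \<open>j < p\<close> by blast
    then show ?thesis unfolding s_def by (intro sum_pos2[of _ i]) auto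
  qed
  let ?H = "(\<lambda>j. {j}) ` {..<p}"
  have "\<exists>E \<in> sets (gaussian_vec n \<sigma>).
          measure (gaussian_vec n \<sigma>) E \<ge> 1 - card ?H * sqrt 2 / t \<and>
          (\<forall>\<omega>\<in>E. \<forall>g\<in>?H. (\<Sum>u\<in>g. (\<Sum>i<n. X i u * \<omega> i)\<^sup>2 / s u) < 4 * \<sigma>\<^sup>2 * card g * ln t)"
    using s by (intro gaussian_vec_group_energy_event assms(1,2)) (auto simp: s_def)
  moreover have "card ?H = p" by (simp add: card_image)
  ultimately obtain E where "E \<in> sets (gaussian_vec n \<sigma>)"
    "measure (gaussian_vec n \<sigma>) E \<ge> 1 - p * sqrt 2 / t"
    and event: "\<And>\<omega> j. \<omega> \<in> E \<Longrightarrow> j < p \<Longrightarrow> (\<Sum>i<n. X i j * \<omega> i)\<^sup>2 / s j < 4 * \<sigma>\<^sup>2 * ln t"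
    by auto
  moreover have "noise_column_bound n p X lam \<omega>" if "\<omega> \<in> E" for \<omega>
    unfolding noise_column_bound_def
  proof (intro allI impI)
    fix j assume "j < p"
    have "(\<Sum>i<n. X i j * \<omega> i)\<^sup>2 < 4 * \<sigma>\<^sup>2 * ln t * s j"
      using event[OF that \<open>j < p\<close>] s[OF \<open>j < p\<close>] by (simp add: divide_less_eq)
    also have "\<dots> \<le> lam\<^sup>2 * real n * s j"
      using lam s[OF \<open>j < p\<close>] by (intro mult_right_mono) auto
    also have "\<dots> = (lam * real n * (col_norm n X j / sqrt (real n)))\<^sup>2"
      using s[OF \<open>j < p\<close>]
      by (cases "n = 0") (simp_all add: col_norm_def s_def power_mult_distrib power_divide power2_eq_square)
    finally have "\<bar>\<Sum>i<n. X i j * \<omega> i\<bar>\<^sup>2 \<le> (lam * real n * (col_norm n X j / sqrt (real n)))\<^sup>2"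
      by simp
    then show "\<bar>\<Sum>i<n. X i j * \<omega> i\<bar> \<le> lam * real n * (col_norm n X j / sqrt (real n))"
      by (rule power2_le_imp_le) (simp add: assms(3) col_norm_def sum_nonneg)
  qed
  ultimately show ?thesis by blast
qed

lemma noise_group_bound_event:
  fixes \<sigma> t lam :: real and A :: "nat \<Rightarrow> 'v \<Rightarrow> real"
  assumes "\<sigma> > 0" and "t > 0" and "n > 0" and "lam \<ge> 0" and "k \<ge> 1"
    and "finite V" and "is_partition G V"
    and bounded: "\<forall>g\<in>G. \<forall>v\<in>g. \<forall>i<n. \<bar>\<Sum>j<p. X i j * A j v\<bar> \<le> 1"
    and lam: "4 * (2 ^ k - 1) * \<sigma>\<^sup>2 * ln t \<le> lam\<^sup>2 * real n"
  shows "\<exists>E \<in> sets (gaussian_vec n \<sigma>).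
           measure (gaussian_vec n \<sigma>) E \<ge> 1 - card G * sqrt 2 / t \<and>
           (\<forall>\<omega>\<in>E. noise_group_bound n p k X A G lam \<omega>)"
proof -
  define K :: real where "K = 2 ^ k - 1"
  have "K \<ge> 1"
    using power_increasing[of 1 k "2::real"] assms(5) by (simp add: K_def)
  define c where "c v i = (\<Sum>j<p. X i j * A j v)" for v i
  have G: "finite G" "\<And>g. g \<in> G \<Longrightarrow> finite g \<and> g \<noteq> {}"
    using assms(6,7) unfolding is_partition_def by (auto intro: finite_subset finite_UnionD)
  have "(\<Sum>i<n. (c v i)\<^sup>2) \<le> real n" if "g \<in> G" "v \<in> g" for g v
  proof -
    have "(\<Sum>i<n. (c v i)\<^sup>2) \<le> (\<Sum>i<n. 1)"
      using bounded that by (intro sum_mono) (auto simp: c_def abs_square_le_1)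
    then show ?thesis by simp
  qed
  then obtain E where "E \<in> sets (gaussian_vec n \<sigma>)"
    "measure (gaussian_vec n \<sigma>) E \<ge> 1 - card G * sqrt 2 / t"
    and event: "\<And>\<omega> g. \<omega> \<in> E \<Longrightarrow> g \<in> G \<Longrightarrow>
                  (\<Sum>v\<in>g. (\<Sum>i<n. c v i * \<omega> i)\<^sup>2 / real n) < 4 * \<sigma>\<^sup>2 * card g * ln t"
    using gaussian_vec_group_energy_event[of \<sigma> t G "\<lambda>_. real n" c n] assms(1-3) G
    by auto
  moreover have "noise_group_bound n p k X A G lam \<omega>" if "\<omega> \<in> E" for \<omega>
    unfolding noise_group_bound_def
  proof
    fix g assume "g \<in> G"
    have "(\<Sum>v\<in>g. (\<Sum>i<n. c v i * \<omega> i)\<^sup>2) < 4 * \<sigma>\<^sup>2 * ln t * (real n * card g)"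
      using event[OF that \<open>g \<in> G\<close>] assms(3)
      by (simp add: sum_divide_distrib[symmetric] divide_less_eq mult_ac)
    also have "\<dots> \<le> (lam\<^sup>2 * real n / K) * (real n * card g)"
      using lam \<open>K \<ge> 1\<close> by (intro mult_right_mono) (auto simp: K_def field_simps)
    also have "\<dots> = (lam * real n * sqrt (real (card g) / K))\<^sup>2"
      using \<open>K \<ge> 1\<close> by (simp add: power_mult_distrib) (simp add: power2_eq_square)
    finally have "sqrt (\<Sum>v\<in>g. (\<Sum>i<n. c v i * \<omega> i)\<^sup>2) \<le> sqrt ((lam * real n * sqrt (real (card g) / K))\<^sup>2)"
      by (intro real_sqrt_le_mono less_imp_le)
    then have "sqrt (\<Sum>v\<in>g. (\<Sum>i<n. c v i * \<omega> i)\<^sup>2) \<le> lam * real n * sqrt (real (card g) / K)"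
      using assms(4) \<open>K \<ge> 1\<close> by simp
    then show "sqrt (\<Sum>v\<in>g. (\<Sum>i<n. (\<Sum>j<p. X i j * A j v) * \<omega> i)\<^sup>2)
                 \<le> lam * real n * sqrt (real (card g) / (2 ^ k - 1))"
      by (simp add: c_def K_def)
  qed
  ultimately show ?thesis by blast
qed

lemma tuning_parameter_square_bound:
  fixes \<sigma> lam K :: real
  assumes "n > 0" and "p \<ge> 1" and "K \<ge> 1" and "\<sigma> \<ge> 0"
    and lam: "lam \<ge> 4 * sqrt K * \<sigma> * sqrt (ln (real p) / real n)"
  shows "0 \<le> lam" and "4 * K * \<sigma>\<^sup>2 * ln (real p ^ 4) \<le> lam\<^sup>2 * real n"
    and "4 * \<sigma>\<^sup>2 * ln (real p ^ 4) \<le> lam\<^sup>2 * real n"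
proof -
  have "0 \<le> ln (real p)" using assms(2) by simp
  then have rhs: "0 \<le> 4 * sqrt K * \<sigma> * sqrt (ln (real p) / real n)"
    using assms(3,4) by simp
  with lam show "0 \<le> lam" by linarith
  have "(4 * sqrt K * \<sigma> * sqrt (ln (real p) / real n))\<^sup>2 \<le> lam\<^sup>2"
    using lam rhs by (intro power_mono) auto
  also have "(4 * sqrt K * \<sigma> * sqrt (ln (real p) / real n))\<^sup>2 = 4 * K * \<sigma>\<^sup>2 * ln (real p ^ 4) / real n"
    using \<open>0 \<le> ln (real p)\<close> assms(2,3) by (simp add: power_mult_distrib ln_realpow)
  finally show K_bound: "4 * K * \<sigma>\<^sup>2 * ln (real p ^ 4) \<le> lam\<^sup>2 * real n"
    using assms(1) by (simp add: divide_le_eq)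
  have "4 * \<sigma>\<^sup>2 * ln (real p ^ 4) \<le> 4 * K * \<sigma>\<^sup>2 * ln (real p ^ 4)"
    using mult_right_mono[OF assms(3), of "4 * \<sigma>\<^sup>2 * ln (real p ^ 4)"] \<open>0 \<le> ln (real p)\<close>
    by (simp add: ln_realpow mult_ac)
  with K_bound show "4 * \<sigma>\<^sup>2 * ln (real p ^ 4) \<le> lam\<^sup>2 * real n" by linarith
qed

lemma failure_probability_le:
  assumes "real p \<ge> 2" and "m \<le> p"
  shows "1 - 1 / real p - 2 / (real p)\<^sup>2
           \<le> (1 - real p * sqrt 2 / real p ^ 4) + (1 - real m * sqrt 2 / real p ^ 4) - 1"
proof -
  have "sqrt 2 \<le> (2::real)" using real_sqrt_le_mono[of 2 4] by (simp add: real_sqrt_four)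
  then have "(real p + real m) * sqrt 2 \<le> (2 * real p) * 2"
    using assms by (intro mult_mono) auto
  also have "\<dots> \<le> real p * (real p * real p)"
    using assms(1) mult_mono[OF assms(1) assms(1)] by simp
  finally have "(real p + real m) * sqrt 2 / real p ^ 4 \<le> real p ^ 3 / real p ^ 4"
    using assms(1) by (intro divide_right_mono) (auto simp: power3_eq_cube)
  also have "real p ^ 3 / real p ^ 4 = 1 / real p"
    using assms(1) by (simp add: power_eq_if)
  finally have "real p * sqrt 2 / real p ^ 4 + real m * sqrt 2 / real p ^ 4 \<le> 1 / real p"
    by (simp add: add_divide_distrib distrib_right)
  moreover have "0 \<le> 2 / (real p)\<^sup>2" by simp
  ultimately show ?thesis by linarith
qed

theorem theorem1:
  fixes n p k :: nat and \<sigma> \<alpha> lam :: real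
    and X :: "nat \<Rightarrow> nat \<Rightarrow> real"
    and V :: "'v set" and r :: 'v and par :: "'v \<Rightarrow> 'v"
    and A :: "nat \<Rightarrow> 'v \<Rightarrow> real" and G :: "'v set set"
    and \<beta>s :: "nat \<Rightarrow> real" and \<gamma>s :: "'v \<Rightarrow> real"
  assumes "n \<ge> 1" and "p \<ge> 2" and "k \<ge> 1" and "\<sigma> > 0"
    and X_bin: "\<forall>i<n. \<forall>j<p. X i j \<in> {0, 1}"
    and X_nz: "\<forall>j<p. \<exists>i<n. X i j \<noteq> 0"
    and tree: "rooted_tree V r par"
    and part: "is_partition G V"
    and hi: "\<forall>g\<in>G. card g \<le> 2 ^ k - 1"
    and hii: "card G \<le> p"
    and hiii: "\<forall>g\<in>G. \<forall>i<n. \<forall>v\<in>V.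
                 (\<Sum>j<p. X i j * A j v * (if v \<in> g then 1 else 0)) \<in> {0, 1}"
    and beta_star: "\<forall>j<p. \<beta>s j = linmap V A \<gamma>s j"
    and "0 \<le> \<alpha>" and "\<alpha> \<le> 1"
    and lam: "lam \<ge> 4 * sqrt (2 ^ k - 1) * \<sigma> * sqrt (ln (real p) / real n)"
  shows "\<exists>E \<in> sets (gaussian_vec n \<sigma>).
           measure (gaussian_vec n \<sigma>) E \<ge> 1 - 1 / real p - 2 / (real p)\<^sup>2 \<and>
           (\<forall>\<epsilon>\<in>E. \<forall>\<beta>h \<gamma>h.
              let y = (\<lambda>i. (\<Sum>j<p. X i j * \<beta>s j) + \<epsilon> i) in
              ((\<forall>j<p. \<beta>h j = linmap V A \<gamma>h j) \<and>
               (\<forall>\<beta> \<gamma>. (\<forall>j<p. \<beta> j = linmap V A \<gamma> j) \<longrightarrow>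
                  tsla_objective n p k X G \<alpha> lam y \<beta>h \<gamma>h \<le> tsla_objective n p k X G \<alpha> lam y \<beta> \<gamma>))
              \<longrightarrow> 1 / real n * (\<Sum>i<n. ((\<Sum>j<p. X i j * \<beta>h j) - (\<Sum>j<p. X i j * \<beta>s j))\<^sup>2)
                  \<le> 4 * lam * tsla_penalty n p k X G \<alpha> \<beta>s \<gamma>s)"
proof -
  interpret prob_space "gaussian_vec n \<sigma>" by (rule prob_space_gaussian_vec) fact
  have "n > 0" and p: "real p \<ge> 2" and "real p ^ 4 > 0" using assms(1,2) by auto
  have "finite V" using tree by (simp add: rooted_tree_def)
  have "(1::real) \<le> 2 ^ k - 1" using power_increasing[of 1 k "2::real"] assms(3) by simp
  then have "0 \<le> lam" and lam_group: "4 * (2 ^ k - 1) * \<sigma>\<^sup>2 * ln (real p ^ 4) \<le> lam\<^sup>2 * real n"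
    and lam_column: "4 * \<sigma>\<^sup>2 * ln (real p ^ 4) \<le> lam\<^sup>2 * real n"
    using tuning_parameter_square_bound[OF \<open>n > 0\<close> _ _ _ lam] p assms(4) by auto
  obtain E1 where E1: "E1 \<in> events" "prob E1 \<ge> 1 - p * sqrt 2 / real p ^ 4"
    "\<forall>\<omega>\<in>E1. noise_column_bound n p X lam \<omega>"
    using noise_column_bound_event[OF assms(4) \<open>real p ^ 4 > 0\<close> \<open>0 \<le> lam\<close> X_nz lam_column] by blast
  have "\<forall>g\<in>G. \<forall>v\<in>g. \<forall>i<n. \<bar>\<Sum>j<p. X i j * A j v\<bar> \<le> 1"
  proof (intro ballI allI impI)
    fix g v i assume "g \<in> G" "v \<in> g" "i < n"
    moreover from \<open>g \<in> G\<close> \<open>v \<in> g\<close> have "v \<in> V" using part unfolding is_partition_def by blast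
    ultimately show "\<bar>\<Sum>j<p. X i j * A j v\<bar> \<le> 1" using hiii by fastforce
  qed
  from noise_group_bound_event[OF assms(4) \<open>real p ^ 4 > 0\<close> \<open>n > 0\<close> \<open>0 \<le> lam\<close> assms(3)
      \<open>finite V\<close> part this lam_group]
  obtain E2 where E2: "E2 \<in> events" "prob E2 \<ge> 1 - card G * sqrt 2 / real p ^ 4"
    "\<forall>\<omega>\<in>E2. noise_group_bound n p k X A G lam \<omega>"
    by blast
  have "prob (E1 \<inter> E2) \<ge> 1 - 1 / real p - 2 / (real p)\<^sup>2"
    using prob_Int_ge[OF E1(1) E2(1)] E1(2) E2(2) failure_probability_le[OF p hii] by linarith
  moreover have "E1 \<inter> E2 \<in> events" using E1(1) E2(1) by blast
  ultimately show ?thesis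
    using E1(3) E2(3) tsla_prediction_error_le[OF \<open>n > 0\<close> \<open>0 \<le> lam\<close> \<open>finite V\<close> part assms(13,14)]
      beta_star
    unfolding Let_def by blast
qed

end
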